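(* Let $0<\varepsilon\le 1/2$, let $X\subset\mathbb{R}^d$ be a finite nonempty (multi)set with $n=|X|$, and $C\subset\mathbb{R}^d$ a finite nonempty set. Define $R\ge0$ by $R^2 = \frac{\varepsilon^2}{41}\cdot\frac{\Phi(C,X)}{n}$, let $X^{near} = \{x\in X: \min_{c\in C}\|x-c\|\le R\}$ and $\bar n = |X^{near}|$. Then $\Delta(X)\ge\frac{16\,\bar n}{\varepsilon^2}R^2$.
   Context: $\mu(Y)$ denotes the centroid of a finite multiset $Y$, $\Delta(Y)=\sum_{y\in Y}\|y-\mu(Y)\|^2$, and $\Phi(C,Y)=\sum_{y\in Y}\min_{c\in C}\|y-c\|^2$. *)

theory Defs
  imports "HOL-Analysis.Analysis" "HOL-Library.Multiset"
begin

definition centroid :: "'a::euclidean_space multiset \<Rightarrow> 'a" where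
  "centroid Y = (1 / real (size Y)) *\<^sub>R (\<Sum>\<^sub># Y)"

definition Delta :: "'a::euclidean_space multiset \<Rightarrow> real" where
  "Delta Y = (\<Sum>y\<in>#Y. (norm (y - centroid Y))\<^sup>2)"

definition Phi :: "'a::euclidean_space set \<Rightarrow> 'a multiset \<Rightarrow> real" where
  "Phi C Y = (\<Sum>y\<in>#Y. Min ((\<lambda>c. (norm (y - c))\<^sup>2) ` C))"

end

theory Submission
  imports Defs
begin

text \<open>
  Write \<open>\<mu>\<close> for the centroid of \<open>X\<close>, \<open>D\<close> for its distance to \<open>C\<close> and \<open>m\<close> for the number
  of near points. By the parallel axis theorem, \<open>\<Phi>(C,X) \<le> \<Delta>(X) + n D\<^sup>2\<close>, which gives
  \<open>41 m R\<^sup>2 \<le> \<epsilon>\<^sup>2 (\<Delta>(X) + m D\<^sup>2)\<close>. Every near point is at distance at least \<open>D - R\<close> from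
  \<open>\<mu>\<close>, so \<open>\<Delta>(X) \<ge> m (D - R)\<^sup>2\<close> when \<open>D \<ge> R\<close>. Combining this with
  \<open>D\<^sup>2 \<le> 3/2 (D - R)\<^sup>2 + 3 R\<^sup>2\<close> and \<open>\<epsilon>\<^sup>2 \<le> 1/4\<close> leaves \<open>40.25 m R\<^sup>2 \<le> 2.5 \<epsilon>\<^sup>2 \<Delta>(X)\<close>.
\<close>

lemma Min_norm_diff_eq_infdist:
  fixes x :: "'a::real_normed_vector"
  assumes "finite C" and "C \<noteq> {}"
  shows "Min ((\<lambda>c. norm (x - c)) ` C) = infdist x C"
  using assms by (simp add: infdist_notempty cInf_eq_Min dist_norm)

lemma infdist_attained_finite:
  fixes x :: "'a::real_normed_vector"
  assumes "finite C" and "C \<noteq> {}"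
  obtains c where "c \<in> C" and "norm (x - c) = infdist x C"
proof -
  have "Min ((\<lambda>c. norm (x - c)) ` C) \<in> (\<lambda>c. norm (x - c)) ` C"
    using assms by simp
  with that show thesis
    by (auto simp: Min_norm_diff_eq_infdist[OF assms])
qed

lemma sum_mset_filter_mset_le:
  fixes f :: "'a \<Rightarrow> 'b::ordered_comm_monoid_add"
  assumes "\<And>x. x \<in># X \<Longrightarrow> 0 \<le> f x"
  shows "(\<Sum>x\<in>#filter_mset P X. f x) \<le> (\<Sum>x\<in>#X. f x)"
  using assms by (induction X) (auto intro: add_mono add_increasing)

lemma sum_mset_inner_left:
  fixes f :: "'b \<Rightarrow> 'a::real_inner"
  shows "(\<Sum>x\<in>#X. f x \<bullet> v) = (\<Sum>x\<in>#X. f x) \<bullet> v"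
  by (induction X) (simp_all add: inner_add_left)

lemma sum_mset_diff_centroid:
  fixes X :: "'a::euclidean_space multiset"
  assumes "X \<noteq> {#}"
  shows "(\<Sum>x\<in>#X. x - centroid X) = 0"
proof -
  have "(\<Sum>x\<in>#X. x - m) = \<Sum>\<^sub># X - real (size X) *\<^sub>R m" for m :: 'a
    by (induction X) (simp_all add: algebra_simps)
  then have "(\<Sum>x\<in>#X. x - centroid X) = \<Sum>\<^sub># X - real (size X) *\<^sub>R centroid X" .
  also have "\<dots> = 0"
    using assms by (simp add: centroid_def)
  finally show ?thesis .
qed

lemma sum_mset_norm_diff_sq_eq_Delta:
  fixes X :: "'a::euclidean_space multiset"
  assumes "X \<noteq> {#}"
  shows "(\<Sum>x\<in>#X. (norm (x - c))\<^sup>2) = Delta X + real (size X) * (norm (centroid X - c))\<^sup>2"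
proof -
  let ?\<mu> = "centroid X"
  have split: "(norm (x - c))\<^sup>2 = (norm (x - ?\<mu>))\<^sup>2 + 2 * ((x - ?\<mu>) \<bullet> (?\<mu> - c)) + (norm (?\<mu> - c))\<^sup>2"
    for x
    using dot_norm[of "x - ?\<mu>" "?\<mu> - c"] by simp
  have "(\<Sum>x\<in>#X. (norm (x - c))\<^sup>2)
      = (\<Sum>x\<in>#X. (norm (x - ?\<mu>))\<^sup>2 + 2 * ((x - ?\<mu>) \<bullet> (?\<mu> - c)) + (norm (?\<mu> - c))\<^sup>2)"
    by (intro arg_cong[where f = sum_mset] image_mset_cong split)
  also have "\<dots> = Delta X + 2 * (\<Sum>x\<in>#X. (x - ?\<mu>) \<bullet> (?\<mu> - c)) + real (size X) * (norm (?\<mu> - c))\<^sup>2"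
    by (simp add: Delta_def sum_mset.distrib sum_mset_distrib_left)
  also have "(\<Sum>x\<in>#X. (x - ?\<mu>) \<bullet> (?\<mu> - c)) = (\<Sum>x\<in>#X. x - ?\<mu>) \<bullet> (?\<mu> - c)"
    by (rule sum_mset_inner_left)
  finally show ?thesis
    using sum_mset_diff_centroid[OF assms] by simp
qed

lemma Phi_le_Delta_plus_infdist_centroid:
  fixes X :: "'a::euclidean_space multiset"
  assumes "finite C" and "C \<noteq> {}" and "X \<noteq> {#}"
  shows "Phi C X \<le> Delta X + real (size X) * (infdist (centroid X) C)\<^sup>2"
proof -
  obtain c where c: "c \<in> C" "norm (centroid X - c) = infdist (centroid X) C"
    using infdist_attained_finite[OF assms(1,2)] .
  have "Phi C X \<le> (\<Sum>x\<in>#X. (norm (x - c))\<^sup>2)"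
    unfolding Phi_def using assms(1) c(1) by (intro sum_mset_mono) simp
  also have "\<dots> = Delta X + real (size X) * (infdist (centroid X) C)\<^sup>2"
    using sum_mset_norm_diff_sq_eq_Delta[OF assms(3)] c(2) by simp
  finally show ?thesis .
qed

lemma size_near_mult_sq_le_Delta:
  fixes X :: "'a::euclidean_space multiset"
  shows "real (size (filter_mset (\<lambda>x. infdist x C \<le> R) X))
           * (max 0 (infdist (centroid X) C - R))\<^sup>2 \<le> Delta X"
proof -
  let ?N = "filter_mset (\<lambda>x. infdist x C \<le> R) X"
  let ?\<mu> = "centroid X"
  have "max 0 (infdist ?\<mu> C - R) \<le> norm (x - ?\<mu>)" if "x \<in># ?N" for x
    using that infdist_triangle[of ?\<mu> C x] by (auto simp: dist_norm norm_minus_commute)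
  then have "real (size ?N) * (max 0 (infdist ?\<mu> C - R))\<^sup>2 \<le> (\<Sum>x\<in>#?N. (norm (x - ?\<mu>))\<^sup>2)"
    using sum_mset_mono[of ?N "\<lambda>_. (max 0 (infdist ?\<mu> C - R))\<^sup>2" "\<lambda>x. (norm (x - ?\<mu>))\<^sup>2"]
    by (simp add: power_mono)
  also have "\<dots> \<le> Delta X"
    unfolding Delta_def by (rule sum_mset_filter_mset_le) simp
  finally show ?thesis .
qed

lemma sq_le_sq_pos_part_diff_plus:
  fixes D R :: real
  assumes "0 \<le> D" and "0 \<le> R"
  shows "D\<^sup>2 \<le> 3/2 * (max 0 (D - R))\<^sup>2 + 3 * R\<^sup>2"
proof (cases "D \<le> R")
  case True
  then have "D\<^sup>2 \<le> R\<^sup>2" using assms(1) by (rule power_mono)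
  then have "D\<^sup>2 \<le> 3 * R\<^sup>2" using zero_le_power2[of R] by linarith
  then show ?thesis using True by simp
next
  case False
  have "D\<^sup>2 = 3/2 * (D - R)\<^sup>2 + 3 * R\<^sup>2 - (D - 3 * R)\<^sup>2 / 2"
    by (simp add: power2_eq_square field_simps)
  then have "D\<^sup>2 \<le> 3/2 * (D - R)\<^sup>2 + 3 * R\<^sup>2"
    using zero_le_power2[of "D - 3 * R"] by linarith
  with False show ?thesis by simp
qed

lemma scaled_Phi_le_Delta_plus_infdist_centroid:
  fixes X :: "'a::euclidean_space multiset"
  assumes "finite C" and "C \<noteq> {}" and "X \<noteq> {#}"
    and "0 \<le> m" and "m \<le> real (size X)"
  shows "m / real (size X) * Phi C X \<le> Delta X + m * (infdist (centroid X) C)\<^sup>2"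
proof -
  let ?n = "real (size X)"
  have n_pos: "0 < ?n"
    using assms(3) by (simp add: nonempty_has_size)
  have Delta_nonneg: "0 \<le> Delta X"
    unfolding Delta_def
    using sum_mset_mono[where f = "\<lambda>_. 0" and g = "\<lambda>y. (norm (y - centroid X))\<^sup>2" and K = X]
    by simp
  have "m / ?n * Phi C X \<le> m / ?n * (Delta X + ?n * (infdist (centroid X) C)\<^sup>2)"
    using assms(4) n_pos
    by (intro mult_left_mono Phi_le_Delta_plus_infdist_centroid[OF assms(1-3)]) simp
  also have "\<dots> = m / ?n * Delta X + m * (infdist (centroid X) C)\<^sup>2"
    using n_pos assms(3) by (simp add: algebra_simps)
  also have "m / ?n * Delta X \<le> Delta X"
    using assms(4,5) n_pos Delta_nonneg by (intro mult_left_le_one_le) simp_all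
  finally show ?thesis by simp
qed

lemma size_near_mult_infdist_centroid_sq_le:
  fixes X :: "'a::euclidean_space multiset" and C :: "'a set"
  assumes "0 \<le> R"
  defines "m \<equiv> real (size (filter_mset (\<lambda>x. infdist x C \<le> R) X))"
  shows "m * (infdist (centroid X) C)\<^sup>2 \<le> 3/2 * Delta X + 3 * (m * R\<^sup>2)"
proof -
  let ?D = "infdist (centroid X) C"
  have "m * ?D\<^sup>2 \<le> m * (3/2 * (max 0 (?D - R))\<^sup>2 + 3 * R\<^sup>2)"
    unfolding m_def
    by (rule mult_left_mono[OF sq_le_sq_pos_part_diff_plus[OF infdist_nonneg assms(1)]]) simp
  also have "\<dots> = 3/2 * (m * (max 0 (?D - R))\<^sup>2) + 3 * (m * R\<^sup>2)"
    by (simp add: algebra_simps)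
  also have "\<dots> \<le> 3/2 * Delta X + 3 * (m * R\<^sup>2)"
    using size_near_mult_sq_le_Delta[of C R X] unfolding m_def by simp
  finally show ?thesis .
qed

theorem mainTheorem9:
  fixes eps R :: real and X :: "'a::euclidean_space multiset" and C :: "'a set"
  assumes "0 < eps" and "eps \<le> 1/2"
    and "X \<noteq> {#}"
    and "finite C" and "C \<noteq> {}"
    and "R \<ge> 0"
    and "R\<^sup>2 = (eps\<^sup>2 / 41) * (Phi C X / real (size X))"
  shows "Delta X \<ge> 16 * real (size (filter_mset (\<lambda>x. Min ((\<lambda>c. norm (x - c)) ` C) \<le> R) X)) / eps\<^sup>2 * R\<^sup>2"
proof -
  let ?D = "infdist (centroid X) C"
  define m where "m = real (size (filter_mset (\<lambda>x. infdist x C \<le> R) X))"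
  have m_nonneg: "0 \<le> m" and m_le_n: "m \<le> real (size X)"
    by (simp_all add: m_def)
  have eps_sq: "0 \<le> eps\<^sup>2" "eps\<^sup>2 \<le> 1/4"
    using assms(1,2) power_mono[of eps "1/2" 2] by (simp_all add: power_divide)
  have "41 * (m * R\<^sup>2) \<le> eps\<^sup>2 * Delta X + eps\<^sup>2 * (m * ?D\<^sup>2)"
    using mult_left_mono[OF scaled_Phi_le_Delta_plus_infdist_centroid[OF assms(4,5,3) m_nonneg m_le_n]
        eps_sq(1)]
    by (simp add: assms(7) distrib_left mult.left_commute)
  moreover have "eps\<^sup>2 * (m * ?D\<^sup>2) \<le> 3/2 * (eps\<^sup>2 * Delta X) + 3/4 * (m * R\<^sup>2)"
    using mult_left_mono[OF size_near_mult_infdist_centroid_sq_le[OF assms(6), of C X] eps_sq(1)]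
      mult_right_mono[OF eps_sq(2), of "3 * (m * R\<^sup>2)"] m_nonneg
    by (simp add: m_def algebra_simps)
  moreover have "0 \<le> m * R\<^sup>2"
    using m_nonneg by simp
  ultimately have "16 * (m * R\<^sup>2) \<le> eps\<^sup>2 * Delta X"
    by linarith
  moreover have "filter_mset (\<lambda>x. Min ((\<lambda>c. norm (x - c)) ` C) \<le> R) X
      = filter_mset (\<lambda>x. infdist x C \<le> R) X"
    using Min_norm_diff_eq_infdist[OF assms(4,5)] by simp
  ultimately show ?thesis
    using assms(1) by (simp add: m_def pos_divide_le_eq mult.commute)
qed

end
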